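(* Every right quasi-duo exchange ring is feckly clean, and every left quasi-duo exchange ring is feckly clean.
   Context: Rings are associative with identity, not necessarily commutative; $J(R)$ is the Jacobson radical. A ring is right (resp. left) quasi-duo if every maximal right (resp. left) ideal is a two-sided ideal. A ring $R$ is an exchange ring if for every $a\in R$ there is an idempotent $e\in R$ with $e\in aR$ and $1-e\in(1-a)R$. An element $u\in R$ is full if $RuR=R$. An element $a\in R$ is feckly clean if there exist $e\in R$ and a full element $u\in R$ with $a=e+u$ and $eR(1-e)\subseteq J(R)$; $R$ is feckly clean if every element is feckly clean. *)

theory Defs
  imports Main
begin

text \<open>Rings: type class ring_1 (associative, with identity, not necessarily commutative).
The ring R is the whole type UNIV.\<close>

definition right_ideal :: "'a::ring_1 set \<Rightarrow> bool" where
  "right_ideal I \<longleftrightarrow> 0 \<in> I \<and> (\<forall>x\<in>I. \<forall>y\<in>I. x + y \<in> I) \<and> (\<forall>x\<in>I. - x \<in> I)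
     \<and> (\<forall>x\<in>I. \<forall>r. x * r \<in> I)"

definition left_ideal :: "'a::ring_1 set \<Rightarrow> bool" where
  "left_ideal I \<longleftrightarrow> 0 \<in> I \<and> (\<forall>x\<in>I. \<forall>y\<in>I. x + y \<in> I) \<and> (\<forall>x\<in>I. - x \<in> I)
     \<and> (\<forall>x\<in>I. \<forall>r. r * x \<in> I)"

definition two_sided_ideal :: "'a::ring_1 set \<Rightarrow> bool" where
  "two_sided_ideal I \<longleftrightarrow> right_ideal I \<and> left_ideal I"

definition maximal_right_ideal :: "'a::ring_1 set \<Rightarrow> bool" where
  "maximal_right_ideal M \<longleftrightarrow> right_ideal M \<and> M \<noteq> UNIV \<and>
     (\<forall>I. right_ideal I \<and> M \<subseteq> I \<and> I \<noteq> UNIV \<longrightarrow> I = M)"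

definition maximal_left_ideal :: "'a::ring_1 set \<Rightarrow> bool" where
  "maximal_left_ideal M \<longleftrightarrow> left_ideal M \<and> M \<noteq> UNIV \<and>
     (\<forall>I. left_ideal I \<and> M \<subseteq> I \<and> I \<noteq> UNIV \<longrightarrow> I = M)"

definition jacobson :: "'a::ring_1 set" where
  "jacobson = \<Inter> {M. maximal_right_ideal M}"

definition right_quasi_duo :: "'a::ring_1 itself \<Rightarrow> bool" where
  "right_quasi_duo _ \<longleftrightarrow> (\<forall>M::'a set. maximal_right_ideal M \<longrightarrow> two_sided_ideal M)"

definition left_quasi_duo :: "'a::ring_1 itself \<Rightarrow> bool" where
  "left_quasi_duo _ \<longleftrightarrow> (\<forall>M::'a set. maximal_left_ideal M \<longrightarrow> two_sided_ideal M)"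

definition exchange_ring :: "'a::ring_1 itself \<Rightarrow> bool" where
  "exchange_ring _ \<longleftrightarrow> (\<forall>a::'a. \<exists>e. e * e = e \<and> (\<exists>r. e = a * r) \<and> (\<exists>s. 1 - e = (1 - a) * s))"

text \<open>u is full iff RuR = R, where RuR is the set of finite sums of elements r*u*s.\<close>
definition full :: "'a::ring_1 \<Rightarrow> bool" where
  "full u \<longleftrightarrow> (\<exists>n (x::nat \<Rightarrow> 'a) y. (\<Sum>i<n. x i * u * y i) = 1)"

definition feckly_clean_elem :: "'a::ring_1 \<Rightarrow> bool" where
  "feckly_clean_elem a \<longleftrightarrow> (\<exists>e u. a = e + u \<and> full u \<and> (\<forall>r. e * r * (1 - e) \<in> jacobson))"

definition feckly_clean :: "'a::ring_1 itself \<Rightarrow> bool" where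
  "feckly_clean _ \<longleftrightarrow> (\<forall>a::'a. feckly_clean_elem a)"

end

theory Submission
  imports Defs
begin

text \<open>
  By the exchange property every \<open>a\<close> has an idempotent \<open>e \<in> aR\<close> with
  \<open>1 - e \<in> (1 - a)R\<close>; write \<open>a = (1 - e) + u\<close> with \<open>u = a - (1 - e)\<close>.  In a right
  (resp. left) quasi-duo ring every maximal right (resp. left) ideal \<open>M\<close> is two-sided and
  therefore contains \<open>e\<close> or \<open>1 - e\<close>.  Such an \<open>M\<close> cannot contain \<open>u\<close>; as every proper
  two-sided ideal lies in such an \<open>M\<close>, the ideal \<open>RuR\<close> is all of \<open>R\<close>, i.e. \<open>u\<close> is full.
  Moreover \<open>(1 - e)Re\<close> lies in every such \<open>M\<close>, hence in the Jacobson radical.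

  Since the Jacobson radical is defined via maximal
  right ideals, the left case additionally needs that, in a left quasi-duo ring, the
  intersection of the maximal left ideals lies in the radical.
\<close>

text \<open>A multiplication on the additive group of a ring turning it into a unital ring.
  It is instantiated with \<open>(*)\<close> (right ideals) and with the opposite product (left ideals).\<close>

locale unital_mult =
  fixes mul :: "'a::ring_1 \<Rightarrow> 'a \<Rightarrow> 'a"  (infixl "\<odot>" 70)
  assumes mul_assoc: "(x \<odot> y) \<odot> z = x \<odot> (y \<odot> z)"
    and mul_distrib_left: "x \<odot> (y + z) = x \<odot> y + x \<odot> z"
    and mul_distrib_right: "(x + y) \<odot> z = x \<odot> z + y \<odot> z"
    and mul_one_left: "1 \<odot> x = x"
    and mul_one_right: "x \<odot> 1 = x"
begin

lemma mul_zero_left: "0 \<odot> x = 0"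
  using mul_distrib_right[of 0 0 x] by simp

lemma mul_zero_right: "x \<odot> 0 = 0"
  using mul_distrib_left[of x 0 0] by simp

lemma mul_diff_left: "x \<odot> (y - z) = x \<odot> y - x \<odot> z"
  using mul_distrib_left[of x "y - z" z] by (simp add: eq_diff_eq)

lemma mul_diff_right: "(x - y) \<odot> z = x \<odot> z - y \<odot> z"
  using mul_distrib_right[of "x - y" y z] by (simp add: eq_diff_eq)

lemma mul_minus_right: "x \<odot> (- y) = - (x \<odot> y)"
  using mul_diff_left[of x 0 y] by (simp add: mul_zero_right)

definition rideal :: "'a set \<Rightarrow> bool" where
  "rideal I \<longleftrightarrow> 0 \<in> I \<and> (\<forall>x\<in>I. \<forall>y\<in>I. x + y \<in> I) \<and> (\<forall>x\<in>I. - x \<in> I)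
     \<and> (\<forall>x\<in>I. \<forall>r. x \<odot> r \<in> I)"

definition max_rideal :: "'a set \<Rightarrow> bool" where
  "max_rideal M \<longleftrightarrow> rideal M \<and> M \<noteq> UNIV \<and>
     (\<forall>I. rideal I \<and> M \<subseteq> I \<and> I \<noteq> UNIV \<longrightarrow> I = M)"

lemma rideal_proper_iff:
  assumes "rideal I"
  shows "I \<noteq> UNIV \<longleftrightarrow> 1 \<notin> I"
proof -
  have "x \<in> I" if "1 \<in> I" for x
  proof -
    have "1 \<odot> x \<in> I" using assms that by (simp add: rideal_def)
    then show ?thesis by (simp only: mul_one_left)
  qed
  then show ?thesis by auto
qed

lemma max_rideal_one: "max_rideal M \<Longrightarrow> 1 \<notin> M"
  using rideal_proper_iff by (auto simp: max_rideal_def)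

lemma exists_max_rideal:
  assumes "rideal I" "1 \<notin> I"
  shows "\<exists>M. max_rideal M \<and> I \<subseteq> M"
proof -
  let ?A = "{J. rideal J \<and> I \<subseteq> J \<and> 1 \<notin> J}"
  have "\<exists>M\<in>?A. \<forall>X\<in>?A. M \<subseteq> X \<longrightarrow> X = M"
  proof (rule subset_Zorn_nonempty)
    show "?A \<noteq> {}" using assms by blast
  next
    fix C assume C: "C \<noteq> {}" "subset.chain ?A C"
    then have sub: "C \<subseteq> ?A" and chain: "\<forall>X\<in>C. \<forall>Y\<in>C. X \<subseteq> Y \<or> Y \<subseteq> X"
      by (auto simp: subset.chain_def)
    have add: "x + y \<in> \<Union>C" if "x \<in> \<Union>C" "y \<in> \<Union>C" for x y
    proof -
      from that obtain X Y where "X \<in> C" "Y \<in> C" "x \<in> X" "y \<in> Y" by blast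
      then obtain Z where "Z \<in> C" "x \<in> Z" "y \<in> Z"
        using chain by blast
      moreover have "rideal Z" using \<open>Z \<in> C\<close> sub by blast
      ultimately show ?thesis unfolding rideal_def by blast
    qed
    have "rideal (\<Union>C)"
      using C(1) sub add unfolding rideal_def by blast
    then show "\<Union>C \<in> ?A" using C(1) sub by auto
  qed
  then obtain M where M: "M \<in> ?A" and max: "\<forall>X\<in>?A. M \<subseteq> X \<longrightarrow> X = M" by blast
  have "max_rideal M"
    unfolding max_rideal_def using M max rideal_proper_iff by auto
  with M show ?thesis by blast
qed

lemma rideal_add_principal:
  assumes "rideal M"
  shows "rideal {m + x \<odot> r |m r. m \<in> M}"
  unfolding rideal_def
proof (intro conjI ballI allI)
  show "0 \<in> {m + x \<odot> r |m r. m \<in> M}"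
    using assms by (auto simp: rideal_def mul_zero_right intro!: exI[of _ 0])
next
  fix p q assume "p \<in> {m + x \<odot> r |m r. m \<in> M}" "q \<in> {m + x \<odot> r |m r. m \<in> M}"
  then obtain m r m' r' where "p = m + x \<odot> r" "q = m' + x \<odot> r'" "m \<in> M" "m' \<in> M" by blast
  moreover have "p + q = (m + m') + x \<odot> (r + r')"
    using calculation by (simp add: mul_distrib_left algebra_simps)
  ultimately show "p + q \<in> {m + x \<odot> r |m r. m \<in> M}"
    using assms unfolding rideal_def by blast
next
  fix p assume "p \<in> {m + x \<odot> r |m r. m \<in> M}"
  then obtain m r where "p = m + x \<odot> r" "m \<in> M" by blast
  moreover have "- p = - m + x \<odot> (- r)"
    using calculation by (simp add: mul_minus_right)
  ultimately show "- p \<in> {m + x \<odot> r |m r. m \<in> M}"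
    using assms unfolding rideal_def by blast
next
  fix p t assume "p \<in> {m + x \<odot> r |m r. m \<in> M}"
  then obtain m r where "p = m + x \<odot> r" "m \<in> M" by blast
  moreover have "p \<odot> t = m \<odot> t + x \<odot> (r \<odot> t)"
    using calculation by (simp add: mul_distrib_right mul_assoc)
  ultimately show "p \<odot> t \<in> {m + x \<odot> r |m r. m \<in> M}"
    using assms unfolding rideal_def by blast
qed

lemma max_rideal_comaximal:
  assumes M: "max_rideal M" and x: "x \<notin> M"
  shows "\<exists>m\<in>M. \<exists>r. 1 = m + x \<odot> r"
proof -
  let ?I = "{m + x \<odot> r |m r. m \<in> M}"
  have ideal: "rideal ?I" using M rideal_add_principal by (auto simp: max_rideal_def)
  have "M \<subseteq> ?I"
  proof
    fix m assume "m \<in> M"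
    then have "m + x \<odot> 0 \<in> ?I" by blast
    then show "m \<in> ?I" by (simp add: mul_zero_right)
  qed
  moreover have "x \<in> ?I"
  proof -
    have "0 \<in> M" using M by (simp add: max_rideal_def rideal_def)
    then have "0 + x \<odot> 1 \<in> ?I" by blast
    then show ?thesis by (simp add: mul_one_right)
  qed
  ultimately have "?I = UNIV"
    using M x ideal unfolding max_rideal_def by blast
  then have "1 \<in> ?I" by blast
  then show ?thesis by blast
qed

lemma max_rideal_idempotent:
  assumes M: "max_rideal M" and two_sided: "\<forall>m\<in>M. \<forall>r. r \<odot> m \<in> M"
    and idem: "e \<odot> e = e"
  shows "e \<in> M \<or> 1 - e \<in> M"
proof (cases "e \<in> M")
  case False
  then obtain m r where m: "m \<in> M" and one: "1 = m + e \<odot> r"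
    using max_rideal_comaximal[OF M] by blast
  have "1 - e = (1 - e) \<odot> (m + e \<odot> r)"
    by (simp only: one[symmetric] mul_one_right)
  also have "\<dots> = (1 - e) \<odot> m"
    using idem by (simp add: mul_distrib_left mul_diff_right mul_one_left
        mul_assoc[symmetric] mul_zero_left)
  finally have eq: "1 - e = (1 - e) \<odot> m" .
  have "(1 - e) \<odot> m \<in> M" using two_sided m by blast
  then have "1 - e \<in> M" by (simp only: eq[symmetric])
  then show ?thesis ..
qed simp

lemma radical_right_invertible:
  assumes z: "\<forall>M. max_rideal M \<longrightarrow> z \<in> M"
  shows "\<exists>v. (1 - z) \<odot> v = 1"
proof (rule ccontr)
  assume no_inverse: "\<nexists>v. (1 - z) \<odot> v = 1"
  let ?I = "{m + (1 - z) \<odot> v |m v. m \<in> {0}}"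
  have "rideal {0}"
    using mul_zero_left by (simp add: rideal_def)
  then have "rideal ?I" by (rule rideal_add_principal)
  moreover have "1 \<notin> ?I" using no_inverse by auto
  ultimately obtain M where M: "max_rideal M" "?I \<subseteq> M"
    using exists_max_rideal by blast
  have "0 + (1 - z) \<odot> 1 \<in> ?I" by blast
  then have "1 - z \<in> M" using M(2) by (auto simp: mul_one_right)
  moreover have "z \<in> M" using z M(1) by blast
  moreover have "rideal M" using M(1) by (simp add: max_rideal_def)
  ultimately have "(1 - z) + z \<in> M" unfolding rideal_def by blast
  then show False using max_rideal_one[OF M(1)] by simp
qed

lemma radical_unit:
  assumes z: "\<forall>M. max_rideal M \<longrightarrow> z \<in> M"
  shows "\<exists>v. (1 - z) \<odot> v = 1 \<and> v \<odot> (1 - z) = 1"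
proof -
  obtain v where v: "(1 - z) \<odot> v = 1" using radical_right_invertible[OF z] by blast
  have "v - z \<odot> v = 1" using v by (simp add: mul_diff_right mul_one_left)
  then have v_eq: "v = 1 - (- (z \<odot> v))" by (simp add: diff_eq_eq)
  have "\<forall>M. max_rideal M \<longrightarrow> - (z \<odot> v) \<in> M"
    using z by (simp add: max_rideal_def rideal_def)
  from radical_right_invertible[OF this] obtain w where "(1 - (- (z \<odot> v))) \<odot> w = 1" ..
  then have w: "v \<odot> w = 1" by (simp only: v_eq[symmetric])
  have "1 - z = ((1 - z) \<odot> v) \<odot> w" using w by (simp add: mul_assoc mul_one_right)
  also have "\<dots> = w" using v by (simp add: mul_one_left)
  finally have "1 - z = w" .
  with v w show ?thesis by auto
qed

end

lemma unital_mult_times: "unital_mult ((*) :: 'a::ring_1 \<Rightarrow> 'a \<Rightarrow> 'a)"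
  by unfold_locales (simp_all add: algebra_simps)

lemma unital_mult_opposite: "unital_mult (\<lambda>x y :: 'a::ring_1. y * x)"
  by unfold_locales (simp_all add: algebra_simps)

lemma rideal_times: "unital_mult.rideal (*) = (right_ideal :: 'a::ring_1 set \<Rightarrow> bool)"
  by (simp add: fun_eq_iff unital_mult.rideal_def[OF unital_mult_times] right_ideal_def)

lemma max_rideal_times:
  "unital_mult.max_rideal (*) = (maximal_right_ideal :: 'a::ring_1 set \<Rightarrow> bool)"
  by (simp add: fun_eq_iff unital_mult.max_rideal_def[OF unital_mult_times]
      maximal_right_ideal_def rideal_times)

lemma rideal_opposite:
  "unital_mult.rideal (\<lambda>x y. y * x) = (left_ideal :: 'a::ring_1 set \<Rightarrow> bool)"
  by (simp add: fun_eq_iff unital_mult.rideal_def[OF unital_mult_opposite] left_ideal_def)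

lemma max_rideal_opposite:
  "unital_mult.max_rideal (\<lambda>x y. y * x) = (maximal_left_ideal :: 'a::ring_1 set \<Rightarrow> bool)"
  by (simp add: fun_eq_iff unital_mult.max_rideal_def[OF unital_mult_opposite]
      maximal_left_ideal_def rideal_opposite)

interpretation right: unital_mult "(*) :: 'a::ring_1 \<Rightarrow> 'a \<Rightarrow> 'a"
  rewrites "unital_mult.rideal (*) = (right_ideal :: 'a set \<Rightarrow> bool)"
    and "unital_mult.max_rideal (*) = (maximal_right_ideal :: 'a set \<Rightarrow> bool)"
  by (rule unital_mult_times rideal_times max_rideal_times)+

interpretation left: unital_mult "\<lambda>x y :: 'a::ring_1. y * x"
  rewrites "unital_mult.rideal (\<lambda>x y. y * x) = (left_ideal :: 'a set \<Rightarrow> bool)"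
    and "unital_mult.max_rideal (\<lambda>x y. y * x) = (maximal_left_ideal :: 'a set \<Rightarrow> bool)"
  by (rule unital_mult_opposite rideal_opposite max_rideal_opposite)+

lemma two_sided_ideal_add: "two_sided_ideal I \<Longrightarrow> x \<in> I \<Longrightarrow> y \<in> I \<Longrightarrow> x + y \<in> I"
  by (simp add: two_sided_ideal_def right_ideal_def)

lemma two_sided_ideal_diff: "two_sided_ideal I \<Longrightarrow> x \<in> I \<Longrightarrow> y \<in> I \<Longrightarrow> x - y \<in> I"
  using two_sided_ideal_add[of I x "- y"] by (simp add: two_sided_ideal_def right_ideal_def)

lemma two_sided_ideal_mult_right: "two_sided_ideal I \<Longrightarrow> x \<in> I \<Longrightarrow> x * r \<in> I"
  by (simp add: two_sided_ideal_def right_ideal_def)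

lemma two_sided_ideal_mult_left: "two_sided_ideal I \<Longrightarrow> x \<in> I \<Longrightarrow> r * x \<in> I"
  by (simp add: two_sided_ideal_def left_ideal_def)

lemma sum_lessThan_add:
  fixes f :: "nat \<Rightarrow> 'a::comm_monoid_add"
  shows "(\<Sum>i<a + b. f i) = (\<Sum>i<a. f i) + (\<Sum>i<b. f (a + i))"
  by (induction b) (simp_all add: add.assoc)

definition RuR :: "'a::ring_1 \<Rightarrow> 'a set" where
  "RuR u = {z. \<exists>n (x::nat \<Rightarrow> 'a) y. (\<Sum>i<n. x i * u * y i) = z}"

lemma RuR_intro:
  fixes n :: nat and x y :: "nat \<Rightarrow> 'a::ring_1"
  shows "(\<Sum>i<n. x i * u * y i) = z \<Longrightarrow> z \<in> RuR u"
  unfolding RuR_def by blast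

lemma full_iff_one_in_RuR: "full u \<longleftrightarrow> 1 \<in> RuR u"
  unfolding full_def RuR_def by auto

lemma in_RuR: "u \<in> RuR u"
  by (rule RuR_intro[where n = 1 and x = "\<lambda>_. 1" and y = "\<lambda>_. 1"]) simp

lemma RuR_add:
  assumes "p \<in> RuR u" "q \<in> RuR u"
  shows "p + q \<in> RuR u"
proof -
  obtain n1 :: nat and x1 y1 where p: "(\<Sum>i<n1. x1 i * u * y1 i) = p" using assms(1) unfolding RuR_def by blast
  obtain n2 :: nat and x2 y2 where q: "(\<Sum>i<n2. x2 i * u * y2 i) = q" using assms(2) unfolding RuR_def by blast
  define x where "x i = (if i < n1 then x1 i else x2 (i - n1))" for i
  define y where "y i = (if i < n1 then y1 i else y2 (i - n1))" for i
  have "(\<Sum>i<n1 + n2. x i * u * y i)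
      = (\<Sum>i<n1. x i * u * y i) + (\<Sum>i<n2. x (n1 + i) * u * y (n1 + i))"
    by (rule sum_lessThan_add)
  also have "\<dots> = p + q"
    unfolding p[symmetric] q[symmetric] by (simp add: x_def y_def)
  finally show ?thesis by (rule RuR_intro)
qed

lemma RuR_two_sided: "two_sided_ideal (RuR u)"
proof -
  have neg: "- p \<in> RuR u" and mult: "t * p * t' \<in> RuR u" if p_in: "p \<in> RuR u" for p t t'
  proof -
    obtain n :: nat and x y where p: "(\<Sum>i<n. x i * u * y i) = p"
      using p_in unfolding RuR_def by blast
    show "- p \<in> RuR u"
      by (rule RuR_intro[where n = n and x = "\<lambda>i. - x i" and y = y]) (simp add: p[symmetric] sum_negf)
    show "t * p * t' \<in> RuR u"
      by (rule RuR_intro[where n = n and x = "\<lambda>i. t * x i" and y = "\<lambda>i. y i * t'"])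
        (simp add: p[symmetric] sum_distrib_left sum_distrib_right mult.assoc)
  qed
  have "0 \<in> RuR u" by (rule RuR_intro[where n = 0]) simp
  moreover have "p * t \<in> RuR u" "t * p \<in> RuR u" if "p \<in> RuR u" for p t
    using mult[OF that, of 1 t] mult[OF that, of t 1] by simp_all
  ultimately show ?thesis
    unfolding two_sided_ideal_def right_ideal_def left_ideal_def using neg RuR_add by blast
qed

lemma exchange_remainder_not_in_ideal:
  assumes M: "two_sided_ideal M" "1 \<notin> M" and split: "e \<in> M \<or> 1 - e \<in> M"
    and er: "e = a * r" and es: "1 - e = (1 - a) * s"
  shows "a - (1 - e) \<notin> M"
proof
  assume u: "a - (1 - e) \<in> M"
  from split have "e \<in> M \<and> 1 - e \<in> M"
  proof
    assume e: "e \<in> M"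
    have "1 - a = e - (a - (1 - e))" by simp
    then have "1 - a \<in> M" using two_sided_ideal_diff[OF M(1) e u] by simp
    then have "(1 - a) * s \<in> M" by (rule two_sided_ideal_mult_right[OF M(1)])
    with e es show ?thesis by simp
  next
    assume e': "1 - e \<in> M"
    have "a = (a - (1 - e)) + (1 - e)" by simp
    then have "a \<in> M" using two_sided_ideal_add[OF M(1) u e'] by simp
    then have "a * r \<in> M" by (rule two_sided_ideal_mult_right[OF M(1)])
    with e' er show ?thesis by simp
  qed
  then have "(1 - e) + e \<in> M" using two_sided_ideal_add[OF M(1)] by blast
  with M(2) show False by simp
qed

lemma corner_in_ideal:
  assumes M: "two_sided_ideal M" and split: "e \<in> M \<or> 1 - e \<in> M"
  shows "(1 - e) * t * e \<in> M"
  using split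
proof
  assume "e \<in> M"
  then show ?thesis by (rule two_sided_ideal_mult_left[OF M])
next
  assume "1 - e \<in> M"
  then have "(1 - e) * (t * e) \<in> M" by (rule two_sided_ideal_mult_right[OF M])
  then show ?thesis by (simp add: mult.assoc)
qed

lemma feckly_clean_from_ideal_family:
  fixes \<M> :: "'a::ring_1 set set"
  assumes exchange: "exchange_ring TYPE('a)"
    and proper: "\<And>M. M \<in> \<M> \<Longrightarrow> two_sided_ideal M \<and> 1 \<notin> M"
    and splits: "\<And>M e. M \<in> \<M> \<Longrightarrow> e * e = e \<Longrightarrow> e \<in> M \<or> 1 - e \<in> M"
    and covers: "\<And>I. two_sided_ideal I \<Longrightarrow> 1 \<notin> I \<Longrightarrow> \<exists>M\<in>\<M>. I \<subseteq> M"
    and radical: "\<Inter>\<M> \<subseteq> jacobson"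
  shows "feckly_clean TYPE('a)"
  unfolding feckly_clean_def
proof
  fix a :: 'a
  obtain e r s where idem: "e * e = e" and er: "e = a * r" and es: "1 - e = (1 - a) * s"
    using exchange unfolding exchange_ring_def by blast
  have "full (a - (1 - e))"
  proof (rule ccontr)
    assume "\<not> full (a - (1 - e))"
    then have "1 \<notin> RuR (a - (1 - e))" by (simp add: full_iff_one_in_RuR)
    with covers RuR_two_sided obtain M where M: "M \<in> \<M>" "RuR (a - (1 - e)) \<subseteq> M"
      by blast
    have "a - (1 - e) \<in> M" using M(2) in_RuR by blast
    moreover have "a - (1 - e) \<notin> M"
      using proper[OF M(1)] splits[OF M(1) idem] exchange_remainder_not_in_ideal[OF _ _ _ er es]
      by blast
    ultimately show False by contradiction
  qed
  moreover have "(1 - e) * t * (1 - (1 - e)) \<in> jacobson" for t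
  proof -
    have "(1 - e) * t * e \<in> \<Inter>\<M>"
      using proper splits[OF _ idem] corner_in_ideal by blast
    with radical show ?thesis by auto
  qed
  moreover have "a = (1 - e) + (a - (1 - e))" by simp
  ultimately show "feckly_clean_elem a"
    unfolding feckly_clean_elem_def by blast
qed

lemma left_quasi_duo_radical:
  assumes lqd: "left_quasi_duo TYPE('a::ring_1)"
    and x: "\<forall>L::'a set. maximal_left_ideal L \<longrightarrow> x \<in> L"
  shows "x \<in> jacobson"
  unfolding jacobson_def
proof (rule InterI, rule ccontr, simp)
  fix M :: "'a set"
  assume M: "maximal_right_ideal M" and "x \<notin> M"
  then obtain m t where m: "m \<in> M" and one: "1 = m + x * t"
    using right.max_rideal_comaximal by blast
  have "\<forall>L::'a set. maximal_left_ideal L \<longrightarrow> x * t \<in> L"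
    using lqd x two_sided_ideal_mult_right unfolding left_quasi_duo_def by blast
  then obtain v where "(1 - x * t) * v = 1"
    using left.radical_unit by blast
  moreover have "m = 1 - x * t" using one by (simp add: eq_diff_eq)
  ultimately have "m * v = 1" by simp
  moreover have "m * v \<in> M"
    using M m by (simp add: maximal_right_ideal_def right_ideal_def)
  ultimately show False using right.max_rideal_one[OF M] by simp
qed

lemma right_quasi_duo_exchange_feckly_clean:
  assumes rqd: "right_quasi_duo TYPE('a::ring_1)" and exchange: "exchange_ring TYPE('a)"
  shows "feckly_clean TYPE('a)"
proof (rule feckly_clean_from_ideal_family[OF exchange, of "{M. maximal_right_ideal M}"])
  have two_sided: "maximal_right_ideal M \<Longrightarrow> two_sided_ideal M" for M :: "'a set"
    using rqd unfolding right_quasi_duo_def by blast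
  show "two_sided_ideal M \<and> 1 \<notin> M" if "M \<in> {M. maximal_right_ideal M}" for M :: "'a set"
    using that two_sided right.max_rideal_one by auto
  show "e \<in> M \<or> 1 - e \<in> M" if "M \<in> {M. maximal_right_ideal M}" "e * e = e" for M :: "'a set" and e
    using that by (intro right.max_rideal_idempotent) (auto intro: two_sided two_sided_ideal_mult_left)
  show "\<exists>M\<in>{M. maximal_right_ideal M}. I \<subseteq> M" if "two_sided_ideal I" "1 \<notin> I" for I :: "'a set"
    using that right.exists_max_rideal unfolding two_sided_ideal_def by blast
  show "\<Inter> {M. maximal_right_ideal M} \<subseteq> (jacobson :: 'a set)"
    by (simp add: jacobson_def)
qed

lemma left_quasi_duo_exchange_feckly_clean:
  assumes lqd: "left_quasi_duo TYPE('a::ring_1)" and exchange: "exchange_ring TYPE('a)"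
  shows "feckly_clean TYPE('a)"
proof (rule feckly_clean_from_ideal_family[OF exchange, of "{M. maximal_left_ideal M}"])
  have two_sided: "maximal_left_ideal M \<Longrightarrow> two_sided_ideal M" for M :: "'a set"
    using lqd unfolding left_quasi_duo_def by blast
  show "two_sided_ideal M \<and> 1 \<notin> M" if "M \<in> {M. maximal_left_ideal M}" for M :: "'a set"
    using that two_sided left.max_rideal_one by auto
  show "e \<in> M \<or> 1 - e \<in> M" if "M \<in> {M. maximal_left_ideal M}" "e * e = e" for M :: "'a set" and e
    using that by (intro left.max_rideal_idempotent) (auto intro: two_sided two_sided_ideal_mult_right)
  show "\<exists>M\<in>{M. maximal_left_ideal M}. I \<subseteq> M" if "two_sided_ideal I" "1 \<notin> I" for I :: "'a set"
    using that left.exists_max_rideal unfolding two_sided_ideal_def by blast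
  show "\<Inter> {M. maximal_left_ideal M} \<subseteq> (jacobson :: 'a set)"
    using left_quasi_duo_radical[OF lqd] by blast
qed

theorem theorem4p5:
  shows "(right_quasi_duo TYPE('a::ring_1) \<and> exchange_ring TYPE('a) \<longrightarrow> feckly_clean TYPE('a))
       \<and> (left_quasi_duo TYPE('a) \<and> exchange_ring TYPE('a) \<longrightarrow> feckly_clean TYPE('a))"
  using right_quasi_duo_exchange_feckly_clean left_quasi_duo_exchange_feckly_clean by blast

end
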